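(* Let $\mathcal{F}$ be a projective Fraïssé family of finite trees whose distinguished epimorphisms are monotone and weakly coherent, and which allows splitting edges. Let $(F_i)_{i<\omega}$ be a Fraïssé sequence for $\mathcal{F}$ and $\mathbb{F}=\varprojlim F_i\subseteq\prod_i F_i$ its projective Fraïssé limit. Let $e=(e_n)_{n\in\mathbb{N}}\in\mathbb{F}$. If there is $N$ such that $e_m$ is an endpoint of $F_m$ for every $m\ge N$, then $e$ is an endpoint of $\mathbb{F}$.
   Context: Graphs have reflexive symmetric edge relations; topological graphs carry a compact, Hausdorff, zero-dimensional, second countable topology with closed edge set; finite graphs are discrete. An epimorphism $g\colon B\to A$ is a continuous surjection with $\langle a_1,a_2\rangle\in E(A)$ iff some $b_i\in g^{-1}(a_i)$ satisfy $\langle b_1,b_2\rangle\in E(B)$. A topological graph is disconnected if its vertex set splits into two nonempty disjoint closed sets with no edges between, connected otherwise (subsets carry induced edges and subspace topology). Monotone: every fibre is connected. An arc is a connected topological graph such that removing any vertex except at most two (its endpoints) disconnects it. An embedding is an injective continuous map that is a homeomorphism onto its image and preserves and reflects edges. A vertex $x$ of a topological graph $G$ is an endpoint of $G$ if whenever $H$ is an arc and $f\colon H\to G$ an embedding with $x$ in the image, $x$ is the image of an endpoint of $H$ (for a finite tree these are the vertices with at most one neighbour). In a finite tree, $\mathrm{ord}(a)$ is the number of neighbours other than $a$. For monotone $f\colon B\to A$ of finite trees, $a\in A$ with $\mathrm{ord}(a)=n\ge3$ is a point of weak coherence if some $b\in f^{-1}(a)$ with $\mathrm{ord}(b)=m\ge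 n$ and an injection $p\colon n\to m$ satisfy $f^{-1}(A_i)\subseteq B_{p(i)}$ ($A_i$, $B_j$ the components of $A\setminus\{a\}$, $B\setminus\{b\}$); $f$ is weakly coherent if this holds at every vertex of order $\ge3$. A projective Fraïssé family: class of finite graphs with distinguished epimorphisms, countably many up to isomorphism, containing identities, closed under composition, with joint projection and projective amalgamation. A Fraïssé sequence: compatible distinguished epimorphisms $f^m_n\colon F_m\to F_n$ such that each member is the image of some $F_n$, and every distinguished $f\colon A\to F_m$ satisfies $f\circ g=f^n_m$ for some $n\ge m$ and distinguished $g\colon F_n\to A$; the limit is the inverse limit with coordinatewise edges. Allowing splitting edges: for each member $G$ and nontrivial edge $\{a,b\}$, replacing it by a path $a,\ast,b$ with a new vertex yields a member, and the two maps collapsing $\ast$ to $a$, resp. $b$, are distinguished. *)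

theory Defs
  imports "HOL-Analysis.Analysis"
begin

definition tgraph :: "'v topology \<Rightarrow> ('v \<Rightarrow> 'v \<Rightarrow> bool) \<Rightarrow> bool" where
  "tgraph T E \<longleftrightarrow>
     (\<forall>x y. E x y \<longrightarrow> x \<in> topspace T \<and> y \<in> topspace T) \<and>
     (\<forall>x\<in>topspace T. E x x) \<and>
     (\<forall>x y. E x y \<longrightarrow> E y x) \<and>
     closedin (prod_topology T T) {(x, y). E x y} \<and>
     compact_space T \<and> Hausdorff_space T \<and> T dim_le 0 \<and> second_countable T"

definition gconnected :: "'v topology \<Rightarrow> ('v \<Rightarrow> 'v \<Rightarrow> bool) \<Rightarrow> 'v set \<Rightarrow> bool" where
  "gconnected T E S \<longleftrightarrow>
     \<not> (\<exists>U W. U \<noteq> {} \<and> W \<noteq> {} \<and> U \<inter> W = {} \<and> U \<union> W = S \<and>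
              closedin (subtopology T S) U \<and> closedin (subtopology T S) W \<and>
              \<not> (\<exists>u\<in>U. \<exists>w\<in>W. E u w))"

definition arc_endpoints :: "'v topology \<Rightarrow> ('v \<Rightarrow> 'v \<Rightarrow> bool) \<Rightarrow> 'v set" where
  "arc_endpoints T E = {v \<in> topspace T. gconnected T E (topspace T - {v})}"

definition is_arc :: "'v topology \<Rightarrow> ('v \<Rightarrow> 'v \<Rightarrow> bool) \<Rightarrow> bool" where
  "is_arc T E \<longleftrightarrow> tgraph T E \<and> gconnected T E (topspace T) \<and>
     finite (arc_endpoints T E) \<and> card (arc_endpoints T E) \<le> 2"

definition graph_embedding ::
  "'w topology \<Rightarrow> ('w \<Rightarrow> 'w \<Rightarrow> bool) \<Rightarrow> 'v topology \<Rightarrow> ('v \<Rightarrow> 'v \<Rightarrow> bool) \<Rightarrow> ('w \<Rightarrow> 'v) \<Rightarrow> bool" where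
  "graph_embedding TH EH TG EG h \<longleftrightarrow>
     inj_on h (topspace TH) \<and> embedding_map TH TG h \<and>
     (\<forall>x\<in>topspace TH. \<forall>y\<in>topspace TH. EH x y \<longleftrightarrow> EG (h x) (h y))"

text \<open>Endpoint of a topological graph. Arcs H are quantified over an arbitrary vertex type 'w,
  which is selected by the TYPE argument.\<close>

definition endpoint_of :: "'w itself \<Rightarrow> 'v topology \<Rightarrow> ('v \<Rightarrow> 'v \<Rightarrow> bool) \<Rightarrow> 'v \<Rightarrow> bool" where
  "endpoint_of _ TG EG x \<longleftrightarrow> x \<in> topspace TG \<and>
     (\<forall>(TH :: 'w topology) EH h.
        is_arc TH EH \<and> graph_embedding TH EH TG EG h \<and> x \<in> h ` topspace TH
        \<longrightarrow> (\<exists>v\<in>arc_endpoints TH EH. h v = x))"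

type_synonym 'a graph = "'a set \<times> ('a \<Rightarrow> 'a \<Rightarrow> bool)"

abbreviation V :: "'a graph \<Rightarrow> 'a set" where "V G \<equiv> fst G"
abbreviation Ed :: "'a graph \<Rightarrow> 'a \<Rightarrow> 'a \<Rightarrow> bool" where "Ed G \<equiv> snd G"
abbreviation top_of :: "'a graph \<Rightarrow> 'a topology" where "top_of G \<equiv> discrete_topology (V G)"

definition finite_graph :: "'a graph \<Rightarrow> bool" where
  "finite_graph G \<longleftrightarrow> finite (V G) \<and>
     (\<forall>x y. Ed G x y \<longrightarrow> x \<in> V G \<and> y \<in> V G) \<and>
     (\<forall>x\<in>V G. Ed G x x) \<and> (\<forall>x y. Ed G x y \<longrightarrow> Ed G y x)"

definition fconnected :: "'a graph \<Rightarrow> 'a set \<Rightarrow> bool" where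
  "fconnected G S \<longleftrightarrow> gconnected (top_of G) (Ed G) S"

definition has_cycle :: "'a graph \<Rightarrow> bool" where
  "has_cycle G \<longleftrightarrow> (\<exists>cs. length cs \<ge> 3 \<and> distinct cs \<and> set cs \<subseteq> V G \<and>
      (\<forall>i. Suc i < length cs \<longrightarrow> Ed G (cs ! i) (cs ! Suc i)) \<and>
      Ed G (last cs) (hd cs))"

definition finite_tree :: "'a graph \<Rightarrow> bool" where
  "finite_tree G \<longleftrightarrow> finite_graph G \<and> V G \<noteq> {} \<and> fconnected G (V G) \<and> \<not> has_cycle G"

definition epi :: "'a graph \<Rightarrow> 'a graph \<Rightarrow> ('a \<Rightarrow> 'a) \<Rightarrow> bool" where
  "epi B A f \<longleftrightarrow> f ` V B = V A \<and>
     (\<forall>a1\<in>V A. \<forall>a2\<in>V A. Ed A a1 a2 \<longleftrightarrow>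
        (\<exists>b1\<in>V B. \<exists>b2\<in>V B. f b1 = a1 \<and> f b2 = a2 \<and> Ed B b1 b2))"

definition graph_iso :: "'a graph \<Rightarrow> 'a graph \<Rightarrow> bool" where
  "graph_iso G H \<longleftrightarrow> (\<exists>h. bij_betw h (V G) (V H) \<and>
     (\<forall>x\<in>V G. \<forall>y\<in>V G. Ed G x y \<longleftrightarrow> Ed H (h x) (h y)))"

definition preim :: "'a graph \<Rightarrow> ('a \<Rightarrow> 'a) \<Rightarrow> 'a set \<Rightarrow> 'a set" where
  "preim B f C = {x \<in> V B. f x \<in> C}"

definition monotone_epi :: "'a graph \<Rightarrow> 'a graph \<Rightarrow> ('a \<Rightarrow> 'a) \<Rightarrow> bool" where
  "monotone_epi B A f \<longleftrightarrow> (\<forall>a\<in>V A. fconnected B (preim B f {a}))"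

definition components :: "'a graph \<Rightarrow> 'a set \<Rightarrow> 'a set set" where
  "components G S = {C. C \<noteq> {} \<and> C \<subseteq> S \<and> fconnected G C \<and>
     (\<forall>C'. C \<subseteq> C' \<and> C' \<subseteq> S \<and> fconnected G C' \<longrightarrow> C' = C)}"

definition ord :: "'a graph \<Rightarrow> 'a \<Rightarrow> nat" where
  "ord G a = card {b \<in> V G. b \<noteq> a \<and> Ed G a b}"

definition weak_coherence_point :: "'a graph \<Rightarrow> 'a graph \<Rightarrow> ('a \<Rightarrow> 'a) \<Rightarrow> 'a \<Rightarrow> bool" where
  "weak_coherence_point B A f a \<longleftrightarrow>
     (\<exists>b\<in>preim B f {a}. ord B b \<ge> ord A a \<and>
        (\<exists>p. inj_on p (components A (V A - {a})) \<and>
             p ` components A (V A - {a}) \<subseteq> components B (V B - {b}) \<and>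
             (\<forall>C\<in>components A (V A - {a}). preim B f C \<subseteq> p C)))"

definition weakly_coherent :: "'a graph \<Rightarrow> 'a graph \<Rightarrow> ('a \<Rightarrow> 'a) \<Rightarrow> bool" where
  "weakly_coherent B A f \<longleftrightarrow>
     (\<forall>a\<in>V A. ord A a \<ge> 3 \<longrightarrow> weak_coherence_point B A f a)"

text \<open>A family is given by its class of members Fam and the predicate D B A f
  ("f : B \<rightarrow> A is a distinguished epimorphism").\<close>

definition proj_fraisse_family :: "'a graph set \<Rightarrow> ('a graph \<Rightarrow> 'a graph \<Rightarrow> ('a \<Rightarrow> 'a) \<Rightarrow> bool) \<Rightarrow> bool" where
  "proj_fraisse_family Fam D \<longleftrightarrow>
     (\<forall>G\<in>Fam. finite_graph G) \<and>
     (\<forall>B A f. D B A f \<longrightarrow> B \<in> Fam \<and> A \<in> Fam \<and> epi B A f) \<and>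
     (\<forall>B A f g. D B A f \<and> (\<forall>x\<in>V B. f x = g x) \<longrightarrow> D B A g) \<and>
     (\<exists>S. S \<subseteq> Fam \<and> countable S \<and> (\<forall>G\<in>Fam. \<exists>H\<in>S. graph_iso G H)) \<and>
     (\<forall>G\<in>Fam. D G G id) \<and>
     (\<forall>C B A f g. D C B g \<and> D B A f \<longrightarrow> D C A (f \<circ> g)) \<and>
     (\<forall>A\<in>Fam. \<forall>B\<in>Fam. \<exists>C\<in>Fam. \<exists>f g. D C A f \<and> D C B g) \<and>
     (\<forall>A B C f g. D B A f \<and> D C A g \<longrightarrow>
        (\<exists>E\<in>Fam. \<exists>f' g'. D E B f' \<and> D E C g' \<and> (\<forall>x\<in>V E. f (f' x) = g (g' x))))"

definition split_graph :: "'a graph \<Rightarrow> 'a \<Rightarrow> 'a \<Rightarrow> 'a \<Rightarrow> 'a graph" where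
  "split_graph G a b s =
     (insert s (V G),
      \<lambda>x y. (x \<in> V G \<and> y \<in> V G \<and> Ed G x y \<and> \<not> ((x = a \<and> y = b) \<or> (x = b \<and> y = a))) \<or>
            (x = s \<and> y = s) \<or>
            (x = a \<and> y = s) \<or> (x = s \<and> y = a) \<or>
            (x = b \<and> y = s) \<or> (x = s \<and> y = b))"

definition allows_splitting_edges ::
  "'a graph set \<Rightarrow> ('a graph \<Rightarrow> 'a graph \<Rightarrow> ('a \<Rightarrow> 'a) \<Rightarrow> bool) \<Rightarrow> bool" where
  "allows_splitting_edges Fam D \<longleftrightarrow>
     (\<forall>G\<in>Fam. \<forall>a\<in>V G. \<forall>b\<in>V G. a \<noteq> b \<and> Ed G a b \<longrightarrow>
        (\<exists>s. s \<notin> V G \<and> split_graph G a b s \<in> Fam \<and>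
             D (split_graph G a b s) G (\<lambda>x. if x = s then a else x) \<and>
             D (split_graph G a b s) G (\<lambda>x. if x = s then b else x)))"

definition fraisse_sequence ::
  "'a graph set \<Rightarrow> ('a graph \<Rightarrow> 'a graph \<Rightarrow> ('a \<Rightarrow> 'a) \<Rightarrow> bool) \<Rightarrow>
   (nat \<Rightarrow> 'a graph) \<Rightarrow> (nat \<Rightarrow> nat \<Rightarrow> 'a \<Rightarrow> 'a) \<Rightarrow> bool" where
  "fraisse_sequence Fam D F fs \<longleftrightarrow>
     (\<forall>n. F n \<in> Fam) \<and>
     (\<forall>m n. n \<le> m \<longrightarrow> D (F m) (F n) (fs m n)) \<and>
     (\<forall>n. \<forall>x\<in>V (F n). fs n n x = x) \<and>
     (\<forall>k n m. k \<le> n \<and> n \<le> m \<longrightarrow> (\<forall>x\<in>V (F m). fs n k (fs m n x) = fs m k x)) \<and>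
     (\<forall>A\<in>Fam. \<exists>n f. D (F n) A f) \<and>
     (\<forall>m A f. D A (F m) f \<longrightarrow>
        (\<exists>n\<ge>m. \<exists>g. D (F n) A g \<and> (\<forall>x\<in>V (F n). f (g x) = fs n m x)))"

definition limit_set :: "(nat \<Rightarrow> 'a graph) \<Rightarrow> (nat \<Rightarrow> nat \<Rightarrow> 'a \<Rightarrow> 'a) \<Rightarrow> (nat \<Rightarrow> 'a) set" where
  "limit_set F fs = {x. (\<forall>n. x n \<in> V (F n)) \<and> (\<forall>m n. n \<le> m \<longrightarrow> fs m n (x m) = x n)}"

definition limit_top :: "(nat \<Rightarrow> 'a graph) \<Rightarrow> (nat \<Rightarrow> nat \<Rightarrow> 'a \<Rightarrow> 'a) \<Rightarrow> (nat \<Rightarrow> 'a) topology" where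
  "limit_top F fs = subtopology (product_topology (\<lambda>n. top_of (F n)) UNIV) (limit_set F fs)"

definition limit_edge :: "(nat \<Rightarrow> 'a graph) \<Rightarrow> (nat \<Rightarrow> nat \<Rightarrow> 'a \<Rightarrow> 'a) \<Rightarrow> (nat \<Rightarrow> 'a) \<Rightarrow> (nat \<Rightarrow> 'a) \<Rightarrow> bool" where
  "limit_edge F fs x y \<longleftrightarrow> x \<in> limit_set F fs \<and> y \<in> limit_set F fs \<and> (\<forall>n. Ed (F n) (x n) (y n))"

end

(* Let h embed an arc into the limit with h v = e, and suppose v is not an endpoint. Then the
   arc minus v splits into two sides which, together with v, are closed and connected; their
   images are compact sets through e whose projections to each F_j are connected. From some level
   k >= N on, e_k is a leaf of the tree F_k. At every level m >= k both projections leave the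
   fibre of e_k, hence enter the fibre of its unique neighbour; as the bonding maps are monotone
   and F_m is a tree, these two connected fibres are joined by a single edge, so both projections
   contain its endpoint. Compactness turns these levelwise meetings into a point other than e
   common to both images, contradicting injectivity of h. *)

theory Submission
  imports Defs
begin

section \<open>Connectedness in topological graphs\<close>

lemma gconnectedI:
  assumes "\<And>U W. U \<noteq> {} \<Longrightarrow> W \<noteq> {} \<Longrightarrow> U \<inter> W = {} \<Longrightarrow> U \<union> W = S \<Longrightarrow>
      closedin (subtopology T S) U \<Longrightarrow> closedin (subtopology T S) W \<Longrightarrow>
      \<not> (\<exists>u\<in>U. \<exists>w\<in>W. E u w) \<Longrightarrow> False"
  shows "gconnected T E S"
  using assms unfolding gconnected_def by blast

lemma gconnectedD:
  assumes "gconnected T E S" "U \<noteq> {}" "W \<noteq> {}" "U \<inter> W = {}" "U \<union> W = S"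
    "closedin (subtopology T S) U" "closedin (subtopology T S) W" "\<not> (\<exists>u\<in>U. \<exists>w\<in>W. E u w)"
  shows False
  using assms unfolding gconnected_def by blast

lemma not_gconnectedE:
  assumes "\<not> gconnected T E S"
  obtains U W where "U \<noteq> {}" "W \<noteq> {}" "U \<inter> W = {}" "U \<union> W = S"
    "closedin (subtopology T S) U" "closedin (subtopology T S) W" "\<not> (\<exists>u\<in>U. \<exists>w\<in>W. E u w)"
  using assms that unfolding gconnected_def by blast

lemma fconnected_image_gconnected:
  assumes S: "gconnected TH EH S" "S \<subseteq> topspace TH"
    and g: "continuous_map TH (top_of G) g"
    and edges: "\<And>a b. a \<in> S \<Longrightarrow> b \<in> S \<Longrightarrow> EH a b \<Longrightarrow> Ed G (g a) (g b)"
  shows "fconnected G (g ` S)"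
  unfolding fconnected_def
proof (rule gconnectedI)
  fix P Q
  assume PQ: "P \<noteq> {}" "Q \<noteq> {}" "P \<inter> Q = {}" "P \<union> Q = g ` S" "\<not> (\<exists>u\<in>P. \<exists>w\<in>Q. Ed G u w)"
  have closed_preimage: "closedin (subtopology TH S) {a \<in> S. g a \<in> C}" for C
  proof -
    have "closedin TH {a \<in> topspace TH. g a \<in> C \<inter> V G}"
      by (rule closedin_continuous_map_preimage[OF g]) simp
    moreover have "{a \<in> S. g a \<in> C} = {a \<in> topspace TH. g a \<in> C \<inter> V G} \<inter> S"
      using S(2) continuous_map_image_subset_topspace[OF g] by auto
    ultimately show ?thesis
      unfolding closedin_subtopology by blast
  qed
  define P' where "P' = {a \<in> S. g a \<in> P}"
  define Q' where "Q' = {a \<in> S. g a \<in> Q}"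
  have nonempty: "{a \<in> S. g a \<in> R} \<noteq> {}" if R: "R \<noteq> {}" "R \<subseteq> g ` S" for R
  proof -
    obtain r where "r \<in> R"
      using R(1) by blast
    moreover obtain a where "a \<in> S" "r = g a"
      using R(2) \<open>r \<in> R\<close> by blast
    ultimately show ?thesis
      by blast
  qed
  have "P \<subseteq> g ` S" "Q \<subseteq> g ` S"
    using PQ(4) by blast+
  then have "P' \<noteq> {}" "Q' \<noteq> {}"
    unfolding P'_def Q'_def by (simp_all only: nonempty PQ(1,2) not_False_eq_True)
  moreover have "P' \<inter> Q' = {}" "P' \<union> Q' = S"
    using PQ(3,4) by (auto simp: P'_def Q'_def)
  moreover have "\<not> (\<exists>u\<in>P'. \<exists>w\<in>Q'. EH u w)"
  proof clarify
    fix u w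
    assume "u \<in> P'" "w \<in> Q'" "EH u w"
    then have "Ed G (g u) (g w)" "g u \<in> P" "g w \<in> Q"
      using edges by (auto simp: P'_def Q'_def)
    with PQ(5) show False
      by blast
  qed
  moreover have "closedin (subtopology TH S) P'" "closedin (subtopology TH S) Q'"
    unfolding P'_def Q'_def by (rule closed_preimage)+
  ultimately show False
    by (intro gconnectedD[OF S(1)])
qed

lemma closedin_insert_punctured:
  assumes "closedin (subtopology X (topspace X - {v})) Y" "closedin X {v}"
  shows "closedin X (insert v Y)"
proof -
  obtain C where C: "closedin X C" "Y = C \<inter> (topspace X - {v})"
    using assms(1) unfolding closedin_subtopology by blast
  then have "insert v Y = C \<union> {v}"
    using closedin_subset[OF C(1)] closedin_subset[OF assms(2)] by auto
  then show ?thesis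
    using closedin_Un[OF C(1) assms(2)] by simp
qed

text \<open>A separation P, Q of one side U of the cut point v, with v \<in> P, extends to the separation
  P \<union> W, Q of the whole graph.\<close>

lemma cut_side_separation_extends:
  assumes X: "gconnected TH EH (topspace TH)" and sym: "symp EH"
    and v: "v \<in> topspace TH"
    and UW: "U \<inter> W = {}" "U \<union> W = topspace TH - {v}" "\<not> (\<exists>u\<in>U. \<exists>w\<in>W. EH u w)"
      "closedin TH (insert v W)"
    and PQ: "Q \<noteq> {}" "P \<inter> Q = {}" "P \<union> Q = insert v U" "v \<in> P" "closedin TH P" "closedin TH Q"
      "\<not> (\<exists>u\<in>P. \<exists>w\<in>Q. EH u w)"
  shows False
proof -
  have "Q \<subseteq> U"
    using PQ(2-4) by blast
  have "P \<union> W = P \<union> insert v W"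
    using PQ(4) by blast
  then have "closedin TH (P \<union> W)"
    using closedin_Un[OF PQ(5) UW(4)] by simp
  moreover have "P \<union> W \<noteq> {}" "(P \<union> W) \<union> Q = topspace TH" "(P \<union> W) \<inter> Q = {}"
    using PQ(2-4) UW(1,2) v \<open>Q \<subseteq> U\<close> by auto
  moreover have "\<not> (\<exists>u\<in>P \<union> W. \<exists>w\<in>Q. EH u w)"
  proof clarify
    fix u w
    assume "u \<in> P \<union> W" "w \<in> Q" "EH u w"
    moreover have "\<not> EH w u" if "u \<in> W"
      using UW(3) that \<open>w \<in> Q\<close> \<open>Q \<subseteq> U\<close> by blast
    ultimately show False
      using PQ(7) sympD[OF sym] by blast
  qed
  ultimately show False
    using PQ(1,6) by (intro gconnectedD[OF X, of "P \<union> W" Q]) (simp_all add: subtopology_topspace)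
qed

lemma gconnected_insert_cut_side:
  assumes X: "gconnected TH EH (topspace TH)" and sym: "symp EH"
    and v: "v \<in> topspace TH" "closedin TH {v}"
    and UW: "U \<inter> W = {}" "U \<union> W = topspace TH - {v}" "\<not> (\<exists>u\<in>U. \<exists>w\<in>W. EH u w)"
      "closedin (subtopology TH (topspace TH - {v})) U"
      "closedin (subtopology TH (topspace TH - {v})) W"
  shows "closedin TH (insert v U)" "gconnected TH EH (insert v U)"
proof -
  show closed_U: "closedin TH (insert v U)"
    using closedin_insert_punctured[OF UW(4) v(2)] .
  note extends = cut_side_separation_extends[OF X sym v(1) UW(1-3)
      closedin_insert_punctured[OF UW(5) v(2)]]
  show "gconnected TH EH (insert v U)"
  proof (rule gconnectedI)
    fix P Q
    assume PQ: "P \<noteq> {}" "Q \<noteq> {}" "P \<inter> Q = {}" "P \<union> Q = insert v U"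
      "closedin (subtopology TH (insert v U)) P" "closedin (subtopology TH (insert v U)) Q"
      "\<not> (\<exists>u\<in>P. \<exists>w\<in>Q. EH u w)"
    have closed: "closedin TH P" "closedin TH Q"
      using closedin_trans_full[OF PQ(5) closed_U] closedin_trans_full[OF PQ(6) closed_U] .
    show False
    proof (cases "v \<in> P")
      case True
      then show False
        by (rule extends[OF PQ(2-4) _ closed PQ(7)])
    next
      case False
      have "\<not> (\<exists>u\<in>Q. \<exists>w\<in>P. EH u w)"
        using PQ(7) by (meson sympD[OF sym])
      moreover have "v \<in> Q" "Q \<inter> P = {}" "Q \<union> P = insert v U"
        using PQ(3,4) False by auto
      ultimately show False
        using extends[OF PQ(1)] closed by blast
    qed
  qed
qed

lemma connected_tgraph_cut_point_sides:
  assumes X: "tgraph TH EH" "gconnected TH EH (topspace TH)"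
    and v: "v \<in> topspace TH" "v \<notin> arc_endpoints TH EH"
  obtains U W where "U \<noteq> {}" "W \<noteq> {}" "U \<inter> W = {}" "U \<union> W = topspace TH - {v}"
    "closedin TH (insert v U)" "gconnected TH EH (insert v U)"
    "closedin TH (insert v W)" "gconnected TH EH (insert v W)"
proof -
  have sym: "symp EH"
    using X(1) by (simp add: tgraph_def symp_def)
  have v_closed: "closedin TH {v}"
    using X(1) v(1) by (simp add: tgraph_def closedin_Hausdorff_singleton)
  have "\<not> gconnected TH EH (topspace TH - {v})"
    using v by (simp add: arc_endpoints_def)
  then obtain U W where UW: "U \<noteq> {}" "W \<noteq> {}" "U \<inter> W = {}" "U \<union> W = topspace TH - {v}"
    "closedin (subtopology TH (topspace TH - {v})) U"
    "closedin (subtopology TH (topspace TH - {v})) W" "\<not> (\<exists>u\<in>U. \<exists>w\<in>W. EH u w)"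
    by (rule not_gconnectedE)
  have WU: "W \<inter> U = {}" "W \<union> U = topspace TH - {v}"
    using UW(3,4) by auto
  have WU_no_edge: "\<not> (\<exists>w\<in>W. \<exists>u\<in>U. EH w u)"
    using UW(7) by (meson sympD[OF sym])
  note U_side = gconnected_insert_cut_side[OF X(2) sym v(1) v_closed UW(3,4,7,5,6)]
  note W_side = gconnected_insert_cut_side[OF X(2) sym v(1) v_closed WU WU_no_edge UW(6,5)]
  show ?thesis
    by (rule that[OF UW(1-4) U_side W_side])
qed

section \<open>Finite trees\<close>

definition at_most_one_neighbour :: "'a graph \<Rightarrow> 'a \<Rightarrow> bool" where
  "at_most_one_neighbour G c \<longleftrightarrow>
     (\<forall>a\<in>V G. \<forall>b\<in>V G. a \<noteq> c \<longrightarrow> b \<noteq> c \<longrightarrow> Ed G c a \<longrightarrow> Ed G c b \<longrightarrow> a = b)"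

lemma fconnected_crossing_edge:
  assumes "fconnected G S" "S \<subseteq> V G" "P \<subseteq> S" "P \<noteq> {}" "S - P \<noteq> {}"
  shows "\<exists>x\<in>P. \<exists>y\<in>S - P. Ed G x y"
proof (rule ccontr)
  assume "\<not> ?thesis"
  with assms show False
    by (intro gconnectedD[of "top_of G" "Ed G" S P "S - P"]) (auto simp: fconnected_def)
qed

definition graph_path :: "'a graph \<Rightarrow> 'a set \<Rightarrow> 'a list \<Rightarrow> bool" where
  "graph_path G S ps \<longleftrightarrow> ps \<noteq> [] \<and> distinct ps \<and> set ps \<subseteq> S \<and> successively (Ed G) ps"

lemma graph_path_extend:
  assumes "graph_path G S ps" "Ed G (last ps) w" "w \<in> S"
  obtains qs where "graph_path G S qs" "hd qs = hd ps" "last qs = w"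
proof (cases "w \<in> set ps")
  case True
  then obtain i where i: "i < length ps" "ps ! i = w"
    by (auto simp: in_set_conv_nth)
  let ?qs = "take (Suc i) ps"
  have "graph_path G S ?qs"
    using assms(1) set_take_subset[of "Suc i" ps]
    by (auto simp: graph_path_def successively_conv_nth)
  moreover have "hd ?qs = hd ps"
    using assms(1) by (simp add: graph_path_def hd_take)
  moreover have "last ?qs = w"
    using i by (simp add: take_Suc_conv_app_nth)
  ultimately show ?thesis by (rule that)
next
  case False
  with assms have "graph_path G S (ps @ [w])"
    by (simp add: graph_path_def successively_append_iff)
  moreover have "hd (ps @ [w]) = hd ps"
    using assms(1) by (simp add: graph_path_def)
  ultimately show ?thesis
    using that by simp
qed

lemma fconnected_imp_graph_path:
  assumes "fconnected G S" "S \<subseteq> V G" "x \<in> S" "y \<in> S"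
  obtains ps where "graph_path G S ps" "hd ps = x" "last ps = y"
proof -
  define R where "R = {z \<in> S. \<exists>ps. graph_path G S ps \<and> hd ps = x \<and> last ps = z}"
  have "x \<in> R"
    using assms(3) unfolding R_def graph_path_def by (intro CollectI conjI exI[of _ "[x]"]) auto
  have "S - R = {}"
  proof (rule ccontr)
    assume "S - R \<noteq> {}"
    moreover have "R \<subseteq> S"
      by (auto simp: R_def)
    ultimately obtain z w where z: "z \<in> R" and w: "w \<in> S - R" and "Ed G z w"
      using fconnected_crossing_edge[OF assms(1,2), of R] \<open>x \<in> R\<close> by blast
    then obtain ps where "graph_path G S ps" "hd ps = x" "last ps = z"
      unfolding R_def by auto
    with \<open>Ed G z w\<close> w obtain qs where "graph_path G S qs" "hd qs = x" "last qs = w"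
      using graph_path_extend[of G S ps w] by auto
    with w have "w \<in> R"
      unfolding R_def by blast
    with w show False by blast
  qed
  with assms(4) show ?thesis
    unfolding R_def using that by blast
qed

text \<open>Two adjacent vertices x \<in> P, y \<in> Q and x' \<in> P, y' \<in> Q with y \<noteq> y'
  would close the path from x' to x in P and the path from y to y' in Q into a cycle.\<close>

lemma finite_tree_edge_between_connected_unique:
  assumes T: "finite_tree G" and P: "P \<subseteq> V G" and Q: "Q \<subseteq> V G" and "P \<inter> Q = {}"
    and "fconnected G P" "fconnected G Q"
    and x: "x \<in> P" "x' \<in> P" and y: "y \<in> Q" "y' \<in> Q"
    and "Ed G x y" "Ed G x' y'"
  shows "y = y'"
proof (rule ccontr)
  assume "y \<noteq> y'"
  obtain ps where ps: "graph_path G P ps" "hd ps = x'" "last ps = x"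
    using fconnected_imp_graph_path[OF \<open>fconnected G P\<close> P x(2) x(1)] .
  obtain qs where qs: "graph_path G Q qs" "hd qs = y" "last qs = y'"
    using fconnected_imp_graph_path[OF \<open>fconnected G Q\<close> Q y] .
  have sym: "Ed G a b \<Longrightarrow> Ed G b a" for a b
    using T by (auto simp: finite_tree_def finite_graph_def)
  have "length qs \<ge> 2"
    using qs \<open>y \<noteq> y'\<close> by (cases qs) (auto simp: graph_path_def Suc_le_eq)
  moreover have "ps \<noteq> []"
    using ps by (simp add: graph_path_def)
  ultimately have "length (ps @ qs) \<ge> 3"
    by (cases ps) auto
  moreover have "distinct (ps @ qs)" "set (ps @ qs) \<subseteq> V G"
    using ps qs \<open>P \<inter> Q = {}\<close> P Q by (auto simp: graph_path_def)
  moreover have "successively (Ed G) (ps @ qs)" "Ed G (last (ps @ qs)) (hd (ps @ qs))"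
    using ps qs \<open>Ed G x y\<close> \<open>Ed G x' y'\<close> sym
    by (auto simp: graph_path_def successively_append_iff)
  ultimately have "has_cycle G"
    unfolding has_cycle_def successively_conv_nth by blast
  with T show False
    by (simp add: finite_tree_def)
qed

text \<open>If the image vertex c has a single neighbour n, both sets must cross from the fibre of c to
  the fibre of n; in a tree the connected fibres are joined by exactly one edge, whose endpoint in
  the fibre of n therefore lies in both sets.\<close>

lemma monotone_epi_connected_sets_meet:
  assumes G: "finite_tree G" and f: "epi G A f" "monotone_epi G A f"
    and c: "c \<in> V A" "at_most_one_neighbour A c"
    and S: "S \<subseteq> V G" "fconnected G S" "s \<in> S" "f s = c" "s' \<in> S" "f s' \<noteq> c"
    and T: "T \<subseteq> V G" "fconnected G T" "t \<in> T" "f t = c" "t' \<in> T" "f t' \<noteq> c"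
  shows "\<exists>q\<in>S \<inter> T. f q \<noteq> c \<and> Ed A c (f q)"
proof -
  have crossing: "\<exists>x\<in>X. \<exists>y\<in>X. f x = c \<and> f y \<noteq> c \<and> f y \<in> V A \<and> Ed A c (f y) \<and> Ed G x y"
    if X: "X \<subseteq> V G" "fconnected G X" "x \<in> X" "f x = c" "x' \<in> X" "f x' \<noteq> c" for X x x'
  proof -
    obtain p q where p: "p \<in> X \<inter> preim G f {c}" and q: "q \<in> X - (X \<inter> preim G f {c})"
      and "Ed G p q"
      using fconnected_crossing_edge[OF X(2,1), of "X \<inter> preim G f {c}"] X
      by (auto simp: preim_def)
    moreover have "f p \<in> V A" "f q \<in> V A"
      using f(1) p q X(1) by (auto simp: epi_def)
    ultimately show ?thesis
      using f(1) X(1) unfolding epi_def preim_def by blast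
  qed
  obtain x y where xy: "x \<in> S" "y \<in> S" "f x = c" "f y \<noteq> c" "f y \<in> V A" "Ed A c (f y)"
      "Ed G x y"
    using crossing[OF S] by blast
  obtain x' y' where xy': "x' \<in> T" "y' \<in> T" "f x' = c" "f y' \<noteq> c" "f y' \<in> V A"
      "Ed A c (f y')" "Ed G x' y'"
    using crossing[OF T] by blast
  have "f y' = f y"
    using c(2) xy xy' unfolding at_most_one_neighbour_def by blast
  have "y = y'"
  proof (rule finite_tree_edge_between_connected_unique[OF G])
    show "fconnected G (preim G f {c})" "fconnected G (preim G f {f y})"
      using f(2) c(1) xy(5) by (auto simp: monotone_epi_def)
  qed (use xy xy' \<open>f y' = f y\<close> S(1) T(1) in \<open>auto simp: preim_def\<close>)
  with xy xy' show ?thesis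
    by blast
qed

definition induced_edge :: "'a graph \<Rightarrow> 'a set \<Rightarrow> 'a \<Rightarrow> 'a \<Rightarrow> bool" where
  "induced_edge G S x y \<longleftrightarrow> x \<in> S \<and> y \<in> S \<and> Ed G x y"

lemma tgraph_induced_subgraph:
  assumes "finite_graph G" "S \<subseteq> V G"
  shows "tgraph (discrete_topology S) (induced_edge G S)"
  unfolding tgraph_def
proof (intro conjI)
  show "closedin (prod_topology (discrete_topology S) (discrete_topology S))
      {(x, y). induced_edge G S x y}"
    by (auto simp: induced_edge_def simp flip: prod_topology_discrete_topology)
  have "finite S"
    using assms finite_subset by (auto simp: finite_graph_def)
  then show "compact_space (discrete_topology S)" "second_countable (discrete_topology S)"
    by (simp_all add: compact_space_discrete_topology second_countable_discrete_topology
        countable_finite)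
qed (use assms in \<open>auto simp: induced_edge_def finite_graph_def\<close>)

lemma graph_embedding_induced_subgraph:
  assumes "S \<subseteq> V G"
  shows "graph_embedding (discrete_topology S) (induced_edge G S) (top_of G) (Ed G) id"
  unfolding graph_embedding_def embedding_map_def
  using assms by (auto simp: induced_edge_def Int_absorb1)

lemma induced_path3_arc:
  assumes G: "finite_graph G" and abc: "{a, c, b} \<subseteq> V G" "a \<noteq> b" "a \<noteq> c" "b \<noteq> c"
    and edges: "Ed G c a" "Ed G c b" "\<not> Ed G a b"
  defines "T \<equiv> discrete_topology {a, c, b}" and "E \<equiv> induced_edge G {a, c, b}"
  shows "is_arc T E" "arc_endpoints T E \<subseteq> {a, b}"
proof -
  have sym: "Ed G x y \<Longrightarrow> Ed G y x" for x y
    using G by (auto simp: finite_graph_def)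
  have topT: "topspace T = {a, c, b}"
    by (simp add: T_def)
  have E: "E c a" "E a c" "E c b" "E b c" "\<not> E a b"
    using edges sym by (auto simp: E_def induced_edge_def)
  have "gconnected T E {a, c, b}"
  proof (rule gconnectedI)
    fix U W
    assume UW: "U \<noteq> {}" "W \<noteq> {}" "U \<inter> W = {}" "U \<union> W = {a, c, b}"
      "\<not> (\<exists>u\<in>U. \<exists>w\<in>W. E u w)"
    then consider "c \<in> U" "W \<subseteq> {a, b}" | "c \<in> W" "U \<subseteq> {a, b}"
      by blast
    then show False
      using UW(1,2,5) E by cases blast+
  qed
  moreover have "\<not> gconnected T E {a, b}"
  proof
    assume "gconnected T E {a, b}"
    moreover have "closedin (subtopology T {a, b}) {a}" "closedin (subtopology T {a, b}) {b}"
      by (simp_all add: T_def)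
    ultimately show False
      using abc(2) E(5) by (intro gconnectedD[of T E "{a, b}" "{a}" "{b}"]) auto
  qed
  then show "arc_endpoints T E \<subseteq> {a, b}"
    using abc(3,4) by (auto simp: arc_endpoints_def topT insert_Diff_if)
  moreover from this have "card (arc_endpoints T E) \<le> 2"
    using card_mono[of "{a, b}" "arc_endpoints T E"] abc(2) by simp
  moreover have "tgraph T E"
    unfolding T_def E_def using tgraph_induced_subgraph[OF G abc(1)] .
  ultimately show "is_arc T E"
    unfolding is_arc_def topT by (meson finite.emptyI finite.insertI finite_subset)
qed

text \<open>A vertex c with two distinct neighbours a, b in a finite tree is the middle vertex of the
  induced path a, c, b, an arc of which c is not an endpoint.\<close>

lemma finite_tree_endpoint_imp_at_most_one_neighbour:
  fixes G :: "'a graph"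
  assumes G: "finite_tree G" and endpoint: "endpoint_of TYPE('a) (top_of G) (Ed G) c"
  shows "at_most_one_neighbour G c"
  unfolding at_most_one_neighbour_def
proof (intro ballI impI, rule ccontr)
  fix a b
  assume ab: "a \<in> V G" "b \<in> V G" "a \<noteq> c" "b \<noteq> c" "Ed G c a" "Ed G c b" "a \<noteq> b"
  have c: "c \<in> V G"
    using endpoint by (simp add: endpoint_of_def)
  have fg: "finite_graph G"
    using G by (simp add: finite_tree_def)
  have "\<not> Ed G a b"
  proof
    assume "Ed G a b"
    with ab c fg have "has_cycle G"
      unfolding has_cycle_def successively_conv_nth[symmetric] finite_graph_def
      by (intro exI[of _ "[a, c, b]"]) simp
    with G show False
      by (simp add: finite_tree_def)
  qed
  note path = induced_path3_arc[OF fg _ ab(7,3,4,5,6) this]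
  have "c \<in> id ` topspace (discrete_topology {a, c, b})"
    by simp
  then have "c \<in> arc_endpoints (discrete_topology {a, c, b}) (induced_edge G {a, c, b})"
    using endpoint path(1) graph_embedding_induced_subgraph[of "{a, c, b}" G] ab(1,2) c
    unfolding endpoint_of_def by fastforce
  with path(2) ab(1,2) c ab(3,4) show False
    by blast
qed

section \<open>Inverse limits of finite trees\<close>

lemma limit_set_agree_below:
  assumes "x \<in> limit_set F fs" "y \<in> limit_set F fs" "x j = y j" "i \<le> j"
  shows "x i = y i"
proof -
  have "fs j i (x j) = x i" "fs j i (y j) = y i"
    using assms(1,2,4) unfolding limit_set_def by blast+
  with assms(3) show ?thesis
    by simp
qed

lemma topspace_limit_top: "topspace (limit_top F fs) = limit_set F fs"
proof -
  have "limit_set F fs \<subseteq> (\<Pi>\<^sub>E n\<in>UNIV. V (F n))"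
    unfolding limit_set_def PiE_UNIV_domain by auto
  then show ?thesis
    unfolding limit_top_def by auto
qed

lemma continuous_map_limit_top_coordinate:
  "continuous_map (limit_top F fs) (top_of (F j)) (\<lambda>x. x j)"
  unfolding limit_top_def
  by (intro continuous_map_from_subtopology continuous_map_product_projection) simp

lemma Hausdorff_space_limit_top: "Hausdorff_space (limit_top F fs)"
  unfolding limit_top_def
  by (intro Hausdorff_space_subtopology) (simp add: Hausdorff_space_product_topology)

text \<open>Every neighbourhood of a thread contains all threads agreeing with it at some level,
  since a basic open set of the product constrains only finitely many coordinates.\<close>

lemma limit_top_openin_contains_level_cylinder:
  assumes "openin (limit_top F fs) U" "x \<in> U"
  obtains m where "\<And>y. y \<in> limit_set F fs \<Longrightarrow> y m = x m \<Longrightarrow> y \<in> U"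
proof -
  obtain P where P: "openin (product_topology (\<lambda>n. top_of (F n)) UNIV) P" "U = P \<inter> limit_set F fs"
    using assms(1) unfolding limit_top_def openin_subtopology by blast
  then obtain B where B: "finite {i. B i \<noteq> V (F i)}" "x \<in> Pi\<^sub>E UNIV B" "Pi\<^sub>E UNIV B \<subseteq> P"
    using assms(2) unfolding openin_product_topology_alt by auto
  obtain m where m: "{i. B i \<noteq> V (F i)} \<subseteq> {..<m}"
    using finite_nat_bounded[OF B(1)] by blast
  have "y \<in> U" if y: "y \<in> limit_set F fs" "y m = x m" for y
  proof -
    have "x \<in> limit_set F fs"
      using assms(2) P(2) by blast
    have "y i \<in> B i" for i
    proof (cases "i < m")
      case True
      then have "y i = x i"
        using limit_set_agree_below[OF y(1) \<open>x \<in> limit_set F fs\<close> y(2)] by simp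
      with PiE_mem[OF B(2)] show ?thesis
        by simp
    next
      case False
      with m y(1) show ?thesis
        unfolding limit_set_def by auto
    qed
    with B(3) P(2) y(1) show ?thesis
      by (auto simp: PiE_UNIV_domain)
  qed
  then show ?thesis
    using that by blast
qed

lemma limit_top_closedin_levelwise_limit:
  assumes "closedin (limit_top F fs) S" "x \<in> limit_set F fs" "\<And>j. \<exists>y\<in>S. y j = x j"
  shows "x \<in> S"
proof (rule ccontr)
  assume "x \<notin> S"
  have "openin (limit_top F fs) (limit_set F fs - S)"
    using assms(1) by (metis closedin_def topspace_limit_top)
  then obtain m where "\<And>y. y \<in> limit_set F fs \<Longrightarrow> y m = x m \<Longrightarrow> y \<in> limit_set F fs - S"
    using limit_top_openin_contains_level_cylinder assms(2) \<open>x \<notin> S\<close> by (metis DiffI)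
  moreover obtain y where "y \<in> S" "y m = x m"
    using assms(3) by blast
  moreover have "S \<subseteq> limit_set F fs"
    using closedin_subset[OF assms(1)] by (simp add: topspace_limit_top)
  ultimately show False
    by blast
qed

text \<open>The sets of points of A agreeing at level j with some point of B form a decreasing
  sequence of nonempty closed subsets of the compact set A; a common point lies in B.\<close>

lemma limit_top_compactin_meets_closedin:
  assumes A: "compactin (limit_top F fs) A" and B: "closedin (limit_top F fs) B"
    and agree: "\<And>j. \<exists>a\<in>A. \<exists>b\<in>B. a j = b j"
  shows "A \<inter> B \<noteq> {}"
proof -
  have AB: "A \<subseteq> limit_set F fs" "B \<subseteq> limit_set F fs"
    using compactin_subset_topspace[OF A] closedin_subset[OF B] by (simp_all add: topspace_limit_top)
  define C where "C j = {a \<in> A. a j \<in> (\<lambda>b. b j) ` B}" for j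
  have "closedin (subtopology (limit_top F fs) A) (C j)" for j
  proof -
    have "(\<lambda>b. b j) ` B \<subseteq> V (F j)"
      using AB(2) by (auto simp: limit_set_def)
    then have "closedin (limit_top F fs) {x \<in> topspace (limit_top F fs). x j \<in> (\<lambda>b. b j) ` B}"
      by (intro closedin_continuous_map_preimage[OF continuous_map_limit_top_coordinate]) simp
    then show ?thesis
      unfolding closedin_subtopology C_def using AB(1) by (auto simp: topspace_limit_top)
  qed
  moreover have "C j \<noteq> {}" for j
    using agree[of j] unfolding C_def by force
  moreover have "decseq C"
  proof (rule decseq_SucI, rule subsetI)
    fix j a
    assume "a \<in> C (Suc j)"
    then obtain b where "a \<in> A" "b \<in> B" "a (Suc j) = b (Suc j)"
      unfolding C_def by auto
    with AB have "a j = b j"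
      using limit_set_agree_below[of a F fs b "Suc j" j] by auto
    with \<open>a \<in> A\<close> \<open>b \<in> B\<close> show "a \<in> C j"
      unfolding C_def by auto
  qed
  ultimately have "(\<Inter>j. C j) \<noteq> {}"
    by (rule compact_space_imp_nest[OF compact_space_subtopology[OF A]])
  then obtain a where a: "\<And>j. a \<in> C j"
    by blast
  have "a \<in> A"
    using a[of 0] by (simp add: C_def)
  moreover have "\<exists>b\<in>B. b j = a j" for j
    using a[of j] by (auto simp: C_def)
  moreover from calculation have "a \<in> B"
    using AB(1) by (intro limit_top_closedin_levelwise_limit[OF B]) auto
  ultimately show ?thesis
    by blast
qed

text \<open>At level m \<ge> k both projections cross from the fibre of the leaf e k to its complement,
  so they share a point over the neighbour of e k.\<close>

lemma limit_of_trees_levelwise_meet: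
  assumes trees: "\<And>n. finite_tree (F n)"
    and bonds: "\<And>m n. n \<le> m \<Longrightarrow> epi (F m) (F n) (fs m n) \<and> monotone_epi (F m) (F n) (fs m n)"
    and e: "e \<in> limit_set F fs" "at_most_one_neighbour (F k) (e k)"
    and A: "A \<subseteq> limit_set F fs" "\<And>j. fconnected (F j) ((\<lambda>x. x j) ` A)"
      "e \<in> A" "a \<in> A" "a k \<noteq> e k"
    and B: "B \<subseteq> limit_set F fs" "\<And>j. fconnected (F j) ((\<lambda>x. x j) ` B)"
      "e \<in> B" "b \<in> B" "b k \<noteq> e k"
  shows "\<exists>x\<in>A. \<exists>y\<in>B. x k \<noteq> e k \<and> Ed (F k) (e k) (x k) \<and> x j = y j"
proof -
  define m where "m = max j k"
  have "k \<le> m" "j \<le> m"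
    by (simp_all add: m_def)
  have thread: "fs m k (x m) = x k" if "x \<in> limit_set F fs" for x
    using that \<open>k \<le> m\<close> by (simp add: limit_set_def)
  have proj_sub: "(\<lambda>x. x m) ` A \<subseteq> V (F m)" "(\<lambda>x. x m) ` B \<subseteq> V (F m)"
    using A(1) B(1) by (auto simp: limit_set_def)
  have "e k \<in> V (F k)"
    using e(1) by (simp add: limit_set_def)
  have "e m \<in> (\<lambda>x. x m) ` A" "fs m k (e m) = e k" "a m \<in> (\<lambda>x. x m) ` A" "fs m k (a m) \<noteq> e k"
    "e m \<in> (\<lambda>x. x m) ` B" "b m \<in> (\<lambda>x. x m) ` B" "fs m k (b m) \<noteq> e k"
    using A(1,3-5) B(1,3-5) thread[of e] thread[of a] thread[of b] e(1) by auto
  then obtain q where q: "q \<in> (\<lambda>x. x m) ` A \<inter> (\<lambda>x. x m) ` B" "fs m k q \<noteq> e k"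
    "Ed (F k) (e k) (fs m k q)"
    using monotone_epi_connected_sets_meet[OF trees bonds[OF \<open>k \<le> m\<close>, THEN conjunct1]
        bonds[OF \<open>k \<le> m\<close>, THEN conjunct2] \<open>e k \<in> V (F k)\<close> e(2) proj_sub(1) A(2) _ _ _ _
        proj_sub(2) B(2)]
    by blast
  then obtain x y where "x \<in> A" "y \<in> B" "x m = q" "y m = q"
    by auto
  moreover from this have "x k \<noteq> e k" "Ed (F k) (e k) (x k)"
    using q(2,3) thread[of x] A(1) by auto
  moreover have "x j = y j"
    using limit_set_agree_below[of x F fs y m j] A(1) B(1) \<open>j \<le> m\<close> calculation(1-4) by auto
  ultimately show ?thesis
    by blast
qed

lemma limit_of_trees_connected_sets_meet:
  assumes trees: "\<And>n. finite_tree (F n)"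
    and bonds: "\<And>m n. n \<le> m \<Longrightarrow> epi (F m) (F n) (fs m n) \<and> monotone_epi (F m) (F n) (fs m n)"
    and e: "e \<in> limit_set F fs" "at_most_one_neighbour (F k) (e k)"
    and A: "compactin (limit_top F fs) A" "\<And>j. fconnected (F j) ((\<lambda>x. x j) ` A)"
      "e \<in> A" "a \<in> A" "a k \<noteq> e k"
    and B: "closedin (limit_top F fs) B" "\<And>j. fconnected (F j) ((\<lambda>x. x j) ` B)"
      "e \<in> B" "b \<in> B" "b k \<noteq> e k"
  shows "\<exists>x\<in>A \<inter> B. x k \<noteq> e k"
proof -
  have sub: "A \<subseteq> limit_set F fs" "B \<subseteq> limit_set F fs"
    using compactin_subset_topspace[OF A(1)] closedin_subset[OF B(1)]
    by (simp_all add: topspace_limit_top)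
  define N where "N = {z \<in> V (F k). z \<noteq> e k \<and> Ed (F k) (e k) z}"
  define A' where "A' = {x \<in> topspace (limit_top F fs). x k \<in> N} \<inter> A"
  have "compactin (limit_top F fs) A'"
    unfolding A'_def N_def
    by (intro closed_Int_compactin[OF _ A(1)]
        closedin_continuous_map_preimage[OF continuous_map_limit_top_coordinate]) auto
  moreover have "\<exists>x\<in>A'. \<exists>y\<in>B. x j = y j" for j
  proof -
    obtain x y where "x \<in> A" "y \<in> B" "x k \<noteq> e k" "Ed (F k) (e k) (x k)" "x j = y j"
      using limit_of_trees_levelwise_meet[OF trees bonds e sub(1) A(2-5) sub(2) B(2-5), of j]
      by blast
    moreover from this have "x \<in> A'"
      using sub(1) by (auto simp: A'_def N_def topspace_limit_top limit_set_def)
    ultimately show ?thesis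
      by blast
  qed
  ultimately have "A' \<inter> B \<noteq> {}"
    by (rule limit_top_compactin_meets_closedin[OF _ B(1)])
  then show ?thesis
    unfolding A'_def N_def by auto
qed

lemma fconnected_limit_projection:
  assumes h: "continuous_map TH (limit_top F fs) h"
    "\<And>x y. x \<in> topspace TH \<Longrightarrow> y \<in> topspace TH \<Longrightarrow> EH x y \<Longrightarrow> limit_edge F fs (h x) (h y)"
    and S: "gconnected TH EH S" "S \<subseteq> topspace TH"
  shows "fconnected (F j) ((\<lambda>x. x j) ` h ` S)"
proof -
  have "fconnected (F j) ((\<lambda>a. h a j) ` S)"
  proof (rule fconnected_image_gconnected[OF S])
    show "continuous_map TH (top_of (F j)) (\<lambda>a. h a j)"
      using continuous_map_compose[OF h(1) continuous_map_limit_top_coordinate] by (simp add: o_def)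
  qed (use h(2) S(2) in \<open>auto simp: limit_edge_def\<close>)
  then show ?thesis
    by (simp add: image_image)
qed

lemma limit_set_eventually_differ:
  assumes "x \<in> limit_set F fs" "y \<in> limit_set F fs" "x \<noteq> y"
  obtains i where "\<And>k. i \<le> k \<Longrightarrow> x k \<noteq> y k"
proof -
  obtain i where "x i \<noteq> y i"
    using assms(3) by blast
  then have "x k \<noteq> y k" if "i \<le> k" for k
    using limit_set_agree_below[OF assms(1,2) _ that] by blast
  then show ?thesis
    using that by blast
qed

lemma embedded_arc_cut_point_sides:
  assumes arc: "tgraph TH EH" "gconnected TH EH (topspace TH)"
    and emb: "graph_embedding TH EH (limit_top F fs) (limit_edge F fs) h"
    and v: "v \<in> topspace TH" "v \<notin> arc_endpoints TH EH"
  obtains A B where "compactin (limit_top F fs) A" "\<And>j. fconnected (F j) ((\<lambda>x. x j) ` A)"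
    "compactin (limit_top F fs) B" "\<And>j. fconnected (F j) ((\<lambda>x. x j) ` B)"
    "A \<inter> B = {h v}" "A - {h v} \<noteq> {}" "B - {h v} \<noteq> {}"
proof -
  have inj: "inj_on h (topspace TH)"
    and edges: "\<And>x y. x \<in> topspace TH \<Longrightarrow> y \<in> topspace TH \<Longrightarrow> EH x y \<Longrightarrow>
      limit_edge F fs (h x) (h y)"
    and hom: "homeomorphic_map TH (subtopology (limit_top F fs) (h ` topspace TH)) h"
    using emb by (auto simp: graph_embedding_def embedding_map_def)
  have cont: "continuous_map TH (limit_top F fs) h"
    using homeomorphic_imp_continuous_map[OF hom] continuous_map_in_subtopology by blast
  obtain U W where UW: "U \<noteq> {}" "W \<noteq> {}" "U \<inter> W = {}" "U \<union> W = topspace TH - {v}"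
    "closedin TH (insert v U)" "gconnected TH EH (insert v U)"
    "closedin TH (insert v W)" "gconnected TH EH (insert v W)"
    using connected_tgraph_cut_point_sides[OF arc v] by blast
  have side_in_X: "insert v U \<subseteq> topspace TH" "insert v W \<subseteq> topspace TH"
    using UW(4) v(1) by auto
  have compact_side: "compactin (limit_top F fs) (h ` insert v S)"
    if "closedin TH (insert v S)" for S
    using image_compactin[OF closedin_compact_space[OF _ that] cont] arc(1)
    by (simp add: tgraph_def)
  have "h ` insert v U \<inter> h ` insert v W = h ` (insert v U \<inter> insert v W)"
    using inj_on_image_Int[OF inj side_in_X] by (rule sym)
  also have "\<dots> = {h v}"
    using UW(3) by auto
  finally have meet: "h ` insert v U \<inter> h ` insert v W = {h v}" .
  have "h u \<noteq> h v" if "u \<in> U \<union> W" for u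
    using inj v(1) UW(4) that unfolding inj_on_def by blast
  then have "h ` insert v U - {h v} \<noteq> {}" "h ` insert v W - {h v} \<noteq> {}"
    using UW(1,2) by blast+
  then show ?thesis
    using that[OF compact_side[OF UW(5)] fconnected_limit_projection[OF cont edges UW(6) side_in_X(1)]
        compact_side[OF UW(7)] fconnected_limit_projection[OF cont edges UW(8) side_in_X(2)] meet]
    by blast
qed

lemma endpoint_of_limit_of_trees:
  fixes F :: "nat \<Rightarrow> 'a graph"
  assumes trees: "\<And>n. finite_tree (F n)"
    and bonds: "\<And>m n. n \<le> m \<Longrightarrow> epi (F m) (F n) (fs m n) \<and> monotone_epi (F m) (F n) (fs m n)"
    and e: "e \<in> limit_set F fs" and leaves: "\<And>m. N \<le> m \<Longrightarrow> at_most_one_neighbour (F m) (e m)"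
  shows "endpoint_of TYPE('b) (limit_top F fs) (limit_edge F fs) e"
  unfolding endpoint_of_def
proof (intro conjI allI impI)
  show "e \<in> topspace (limit_top F fs)"
    using e by (simp add: topspace_limit_top)
next
  fix TH :: "'b topology" and EH h
  assume "is_arc TH EH \<and> graph_embedding TH EH (limit_top F fs) (limit_edge F fs) h \<and>
    e \<in> h ` topspace TH"
  then have arc: "tgraph TH EH" "gconnected TH EH (topspace TH)"
    and emb: "graph_embedding TH EH (limit_top F fs) (limit_edge F fs) h"
    and "e \<in> h ` topspace TH"
    by (simp_all add: is_arc_def)
  then obtain v where v: "v \<in> topspace TH" "h v = e"
    by blast
  have "v \<in> arc_endpoints TH EH"
  proof (rule ccontr)
    assume "v \<notin> arc_endpoints TH EH"
    obtain A B where AB: "compactin (limit_top F fs) A"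
      "\<And>j. fconnected (F j) ((\<lambda>x. x j) ` A)" "compactin (limit_top F fs) B"
      "\<And>j. fconnected (F j) ((\<lambda>x. x j) ` B)" "A \<inter> B = {e}" "A - {e} \<noteq> {}" "B - {e} \<noteq> {}"
      using embedded_arc_cut_point_sides[OF arc emb v(1) \<open>v \<notin> arc_endpoints TH EH\<close>, unfolded v(2)]
      by blast
    have sub: "A \<subseteq> limit_set F fs" "B \<subseteq> limit_set F fs"
      using AB(1,3) compactin_subset_topspace by (fastforce simp: topspace_limit_top)+
    obtain a b where a: "a \<in> A" "a \<noteq> e" and b: "b \<in> B" "b \<noteq> e"
      using AB(6,7) by blast
    obtain i1 where i1: "\<And>k. i1 \<le> k \<Longrightarrow> a k \<noteq> e k"
      using limit_set_eventually_differ[OF subsetD[OF sub(1) a(1)] e a(2)] by blast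
    obtain i2 where i2: "\<And>k. i2 \<le> k \<Longrightarrow> b k \<noteq> e k"
      using limit_set_eventually_differ[OF subsetD[OF sub(2) b(1)] e b(2)] by blast
    define k where "k = max N (max i1 i2)"
    have "a k \<noteq> e k" "b k \<noteq> e k" "N \<le> k"
      using i1 i2 by (simp_all add: k_def)
    moreover have "e \<in> A" "e \<in> B"
      using AB(5) by blast+
    ultimately obtain x where "x \<in> A \<inter> B" "x k \<noteq> e k"
      using limit_of_trees_connected_sets_meet[OF trees bonds e leaves[of k] AB(1,2) _ a(1) _
          compactin_imp_closedin[OF Hausdorff_space_limit_top AB(3)] AB(4) _ b(1)]
      by blast
    with AB(5) show False
      by auto
  qed
  with v show "\<exists>v\<in>arc_endpoints TH EH. h v = e"
    by blast
qed

theorem mainTheorem13: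
  fixes Fam :: "'a graph set"
    and D :: "'a graph \<Rightarrow> 'a graph \<Rightarrow> ('a \<Rightarrow> 'a) \<Rightarrow> bool"
    and F :: "nat \<Rightarrow> 'a graph"
    and fs :: "nat \<Rightarrow> nat \<Rightarrow> 'a \<Rightarrow> 'a"
    and e :: "nat \<Rightarrow> 'a"
    and N :: nat
  assumes "proj_fraisse_family Fam D"
    and "\<forall>G\<in>Fam. finite_tree G"
    and "\<forall>B A f. D B A f \<longrightarrow> monotone_epi B A f \<and> weakly_coherent B A f"
    and "allows_splitting_edges Fam D"
    and "fraisse_sequence Fam D F fs"
    and "e \<in> limit_set F fs"
    and "\<forall>m\<ge>N. endpoint_of TYPE('a) (top_of (F m)) (Ed (F m)) (e m)"
  shows "endpoint_of TYPE('b) (limit_top F fs) (limit_edge F fs) e"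
proof (rule endpoint_of_limit_of_trees)
  have members: "F n \<in> Fam" and bonds: "n \<le> m \<Longrightarrow> D (F m) (F n) (fs m n)" for m n
    using assms(5) by (auto simp: fraisse_sequence_def)
  have distinguished_epi: "\<forall>B A f. D B A f \<longrightarrow> B \<in> Fam \<and> A \<in> Fam \<and> epi B A f"
    using assms(1) unfolding proj_fraisse_family_def by (elim conjE) assumption
  show trees: "finite_tree (F n)" for n
    using assms(2) members by blast
  show "epi (F m) (F n) (fs m n) \<and> monotone_epi (F m) (F n) (fs m n)" if "n \<le> m" for m n
  proof
    show "epi (F m) (F n) (fs m n)"
      using distinguished_epi bonds[OF that] by blast
    show "monotone_epi (F m) (F n) (fs m n)"
      using assms(3) bonds[OF that] by blast
  qed
  show "at_most_one_neighbour (F m) (e m)" if "N \<le> m" for m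
    using finite_tree_endpoint_imp_at_most_one_neighbour[OF trees] assms(7) that by blast
qed (use assms(6) in simp)

end
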